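(* Let $f(\pi)=\pi f_1(0,\pi)+(1-\pi)f_0(0,\pi)$ be a $k$-equilibrium continuous-time dynamics with stable equilibria $\pi^{\mathfrak e}_1\le\dots\le\pi^{\mathfrak e}_k$ and basins $I_1,\dots,I_k$. Work in continuous time, with group $A$ initially advantaged, $\pi_0(1|B)\in I_i$, $\pi_0(1|A)\in I_j$ (so $i\le j$). Under the unconstrained policy UN, $(\pi_t(1|A),\pi_t(1|B))\to(\pi^{\mathfrak e}_j,\pi^{\mathfrak e}_i)$ and $U_t(UN)\to u(1)\big(g_A\pi^{\mathfrak e}_j+(1-g_A)\pi^{\mathfrak e}_i\big)$. Moreover: (i) If the AA1 policy is applied at all times and $L_{AA1}:=\max_{\pi\in[0,1]}|f_1(0,\pi)-f_0(0,\pi)|<1$, then both profiles converge to $\pi^{\mathfrak e}_i$ and $\lim_tU_t(AA1)=u(1)\pi^{\mathfrak e}_i\le\lim_tU_t(UN)$. (ii) If $f_1,f_0$ are $\ell_1$-Lipschitz with constants $L_1,L_0$, the AA2 policy is applied at all times, and $L_{AA2}:=\max_{0\le\Delta\le\pi\le1}\big(2[\pi L_1+(1-\pi)L_0]+|f_1(\Delta,\pi-\Delta)-f_0(\Delta,\pi-\Delta)|\big)<1$, then both profiles converge to $\pi^{\mathfrak e}_j$ and $\lim_tU_t(AA2)=u(1)\pi^{\mathfrak e}_j\ge\lim_tU_t(UN)$. Here $U_t(P)$ is the institutional utility of policy $P$ evaluated on the profiles at time $t$ of the trajectory generated by $P$ from the given initial profiles.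
   Context: Two groups $A,B$ with fractions $g_A\in[0,1]$, $g_B=1-g_A$; $\neg j$ is the other group. Group $j$ has profile $\pi_t(1|j)\in[0,1]$, $\pi_t(0|j)=1-\pi_t(1|j)$. Policy $\tau(v;j)\in[0,1]$; utilities $u(0)\le0\le u(1)$; $U_t(\tau)=\sum_jg_j\sum_vu(v)\tau(v;j)\pi_t(v|j)$. Selection rates $\beta_t(v;j)=\tau(v;j)\pi_t(v|j)$. Dynamics: continuously differentiable $f_0,f_1:[0,1]^2\to[0,1]$; continuous time $\frac{d}{dt}\pi_t(1|j)=\pi_t(1|j)(f_1(\beta_t(0;j),\beta_t(1;j))-1)+(1-\pi_t(1|j))f_0(\beta_t(0;j),\beta_t(1;j))$, policy determined by current profiles. UN: $\tau(1;j)=1,\tau(0;j)=0$, so each group follows $\dot\pi=f(\pi)-\pi$. Definition: $f$ is a $k$-equilibrium CT dynamics if it is continuously differentiable with fixed points $\pi^{\mathfrak e}_1\le\dots\le\pi^{\mathfrak e}_k$ and fixed points $\delta_i\in(\pi^{\mathfrak e}_i,\pi^{\mathfrak e}_{i+1})$, $i=1,\dots,k-1$, such that with basins $I_1=[0,\delta_1)$, $I_i=(\delta_{i-1},\delta_i)$ for $1<i<k$, $I_k=(\delta_{k-1},1]$ ($I_1=[0,1]$ if $k=1$), every solution of $\dot\pi=f(\pi)-\pi$ started in $I_i$ converges to $\pi^{\mathfrak e}_i$. Group $j$ is advantaged at $t$ if $\pi_t(1|j)\ge\pi_t(1|\neg j)$. AA1 w.r.t. advantaged $j$: $\tau(1;j)=\pi_t(1|\neg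 j)/\pi_t(1|j)$, $\tau(0;j)=0$, $\tau(1;\neg j)=1$, $\tau(0;\neg j)=0$. AA2 w.r.t. advantaged $j$: $\tau(1;j)=\tau(1;\neg j)=1$, $\tau(0;j)=0$, $\tau(0;\neg j)=(\pi_t(1|j)-\pi_t(1|\neg j))/(1-\pi_t(1|\neg j))$. "Applied at all times": w.r.t. the currently advantaged group. "$\ell_1$-Lipschitz with constant $L_i$": $|f_i(x_1,x_2)-f_i(y_1,y_2)|\le L_i(|x_1-y_1|+|x_2-y_2|)$. *)

theory Defs
  imports "HOL-Analysis.Analysis"
begin

datatype grp = GA | GB

fun other :: "grp \<Rightarrow> grp" where
  "other GA = GB" | "other GB = GA"

definition gfrac :: "real \<Rightarrow> grp \<Rightarrow> real" where
  "gfrac gA j = (if j = GA then gA else 1 - gA)"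

(* A profile is  p :: grp => real,  p j = pi(1|j);  pi(0|j) = 1 - p j.
   Outcomes v in {0,1} are encoded as bool (True = 1, False = 0). *)
definition piv :: "(grp \<Rightarrow> real) \<Rightarrow> bool \<Rightarrow> grp \<Rightarrow> real" where
  "piv p v j = (if v then p j else 1 - p j)"

definition utility :: "real \<Rightarrow> real \<Rightarrow> real \<Rightarrow> (bool \<Rightarrow> grp \<Rightarrow> real) \<Rightarrow> (grp \<Rightarrow> real) \<Rightarrow> real" where
  "utility u0 u1 gA tau p =
     (\<Sum>j\<in>{GA, GB}. gfrac gA j *
        (u1 * tau True j * piv p True j + u0 * tau False j * piv p False j))"

definition sel :: "(bool \<Rightarrow> grp \<Rightarrow> real) \<Rightarrow> (grp \<Rightarrow> real) \<Rightarrow> bool \<Rightarrow> grp \<Rightarrow> real" where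
  "sel tau p v j = tau v j * piv p v j"

definition field :: "(real \<Rightarrow> real \<Rightarrow> real) \<Rightarrow> (real \<Rightarrow> real \<Rightarrow> real)
     \<Rightarrow> (bool \<Rightarrow> grp \<Rightarrow> real) \<Rightarrow> (grp \<Rightarrow> real) \<Rightarrow> grp \<Rightarrow> real" where
  "field f0 f1 tau p j =
     p j * (f1 (sel tau p False j) (sel tau p True j) - 1)
     + (1 - p j) * f0 (sel tau p False j) (sel tau p True j)"

(* the currently advantaged group (ties broken towards A; at a tie all the
   policies below induce the same selection rates for either choice) *)
definition adv :: "(grp \<Rightarrow> real) \<Rightarrow> grp" where
  "adv p = (if p GB \<le> p GA then GA else GB)"

definition UNpol :: "(grp \<Rightarrow> real) \<Rightarrow> bool \<Rightarrow> grp \<Rightarrow> real" where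
  "UNpol p v j = (if v then 1 else 0)"

definition AA1pol :: "(grp \<Rightarrow> real) \<Rightarrow> bool \<Rightarrow> grp \<Rightarrow> real" where
  "AA1pol p v j = (let a = adv p in
     if v then (if j = a then p (other a) / p a else 1) else 0)"

definition AA2pol :: "(grp \<Rightarrow> real) \<Rightarrow> bool \<Rightarrow> grp \<Rightarrow> real" where
  "AA2pol p v j = (let a = adv p in
     if v then 1
     else (if j = a then 0 else (p a - p (other a)) / (1 - p (other a))))"

definition trajectory :: "(real \<Rightarrow> real \<Rightarrow> real) \<Rightarrow> (real \<Rightarrow> real \<Rightarrow> real)
     \<Rightarrow> ((grp \<Rightarrow> real) \<Rightarrow> bool \<Rightarrow> grp \<Rightarrow> real) \<Rightarrow> (real \<Rightarrow> grp \<Rightarrow> real) \<Rightarrow> bool" where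
  "trajectory f0 f1 P x \<longleftrightarrow>
     (\<forall>t\<ge>0. \<forall>j. x t j \<in> {0..1}) \<and>
     (\<forall>t\<ge>0. \<forall>j. ((\<lambda>s. x s j) has_real_derivative field f0 f1 (P (x t)) (x t) j)
                   (at t within {0..}))"

definition C1_on2 :: "(real \<Rightarrow> real \<Rightarrow> real) \<Rightarrow> (real \<times> real) set \<Rightarrow> bool" where
  "C1_on2 h S \<longleftrightarrow> (\<exists>grad :: real \<times> real \<Rightarrow> real \<times> real.
      continuous_on S grad \<and>
      (\<forall>z\<in>S. ((\<lambda>w. h (fst w) (snd w)) has_derivative
                 (\<lambda>d. fst (grad z) * fst d + snd (grad z) * snd d)) (at z within S)))"

definition l1_lipschitz :: "(real \<Rightarrow> real \<Rightarrow> real) \<Rightarrow> real \<Rightarrow> bool" where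
  "l1_lipschitz h L \<longleftrightarrow> (\<forall>x1\<in>{0..1}. \<forall>x2\<in>{0..1}. \<forall>y1\<in>{0..1}. \<forall>y2\<in>{0..1}.
      \<bar>h x1 x2 - h y1 y2\<bar> \<le> L * (\<bar>x1 - y1\<bar> + \<bar>x2 - y2\<bar>))"

definition sol1 :: "(real \<Rightarrow> real) \<Rightarrow> (real \<Rightarrow> real) \<Rightarrow> bool" where
  "sol1 f y \<longleftrightarrow> (\<forall>t\<ge>0. y t \<in> {0..1}) \<and>
     (\<forall>t\<ge>0. (y has_real_derivative (f (y t) - y t)) (at t within {0..}))"

definition basin :: "nat \<Rightarrow> (nat \<Rightarrow> real) \<Rightarrow> nat \<Rightarrow> real set" where
  "basin k \<delta> i =
     (if k = 1 then {0..1}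
      else if i = 1 then {0..<\<delta> 1}
      else if i = k then {\<delta> (k - 1)<..1}
      else {\<delta> (i - 1)<..<\<delta> i})"

definition k_equilibrium :: "(real \<Rightarrow> real) \<Rightarrow> nat \<Rightarrow> (nat \<Rightarrow> real) \<Rightarrow> (nat \<Rightarrow> real) \<Rightarrow> bool" where
  "k_equilibrium f k e \<delta> \<longleftrightarrow>
     k \<ge> 1 \<and> f C1_differentiable_on {0..1} \<and>
     (\<forall>i\<in>{1..k}. e i \<in> {0..1} \<and> f (e i) = e i) \<and>
     (\<forall>i\<in>{1..<k}. e i \<le> e (Suc i)) \<and>
     (\<forall>i\<in>{1..<k}. e i < \<delta> i \<and> \<delta> i < e (Suc i) \<and> f (\<delta> i) = \<delta> i) \<and>
     (\<forall>i\<in>{1..k}. \<forall>y. sol1 f y \<and> y 0 \<in> basin k \<delta> i \<longrightarrow> (y \<longlongrightarrow> e i) at_top)"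

end

theory Submission
  imports Defs "HOL-Real_Asymp.Real_Asymp"
begin

text \<open>
  All three statements reduce to the one-dimensional dynamics \<open>\<pi>' = f(\<pi>) - \<pi>\<close>.
  Under UN each group follows it separately. Under AA1 the selection rates of both groups are
  \<open>(0, min \<pi>\<^sub>A \<pi>\<^sub>B)\<close> and under AA2 they are \<open>(max \<pi>\<^sub>A \<pi>\<^sub>B - \<pi>\<^sub>j, \<pi>\<^sub>j)\<close>, so the
  disadvantaged group (AA1), resp. the advantaged one (AA2), still follows the unforced
  dynamics. The respective conditions \<open>L\<^sub>A\<^sub>A\<^sub>1 < 1\<close>, \<open>L\<^sub>A\<^sub>A\<^sub>2 < 1\<close> make the gap
  \<open>D = \<pi>\<^sub>A - \<pi>\<^sub>B\<close> satisfy \<open>D D' \<le> (L - 1) D\<^sup>2\<close>, hence \<open>D\<^sup>2\<close> decays exponentially: the gap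
  never changes sign and vanishes, so the other group is dragged to the same limit.
\<close>

lemma DERIV_nonpos_imp_nonincreasing_within_ge0:
  fixes \<phi> \<phi>' :: "real \<Rightarrow> real"
  assumes deriv: "\<And>t. 0 \<le> t \<Longrightarrow> (\<phi> has_real_derivative \<phi>' t) (at t within {0..})"
    and nonpos: "\<And>t. 0 \<le> t \<Longrightarrow> \<phi>' t \<le> 0"
    and st: "0 \<le> s" "s \<le> t"
  shows "\<phi> t \<le> \<phi> s"
proof (rule DERIV_nonpos_imp_decreasing_open[OF st(2)])
  fix y assume y: "s < y" "y < t"
  have "at y within {0..} = at y" using y st by (intro at_within_interior) auto
  then show "\<exists>d. DERIV \<phi> y :> d \<and> d \<le> 0" using deriv[of y] nonpos[of y] y st by auto
next
  have "continuous_on {0..} \<phi>" by (rule DERIV_continuous_on) (use deriv in auto)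
  then show "continuous_on {s..t} \<phi>" by (rule continuous_on_subset) (use st in auto)
qed

locale square_contraction =
  fixes D D' :: "real \<Rightarrow> real" and c :: real
  assumes deriv: "\<And>t. 0 \<le> t \<Longrightarrow> (D has_real_derivative D' t) (at t within {0..})"
    and contraction: "\<And>t. 0 \<le> t \<Longrightarrow> D t * D' t \<le> c * (D t)\<^sup>2"
begin

lemma square_le_exp:
  assumes st: "0 \<le> s" "s \<le> t"
  shows "(D t)\<^sup>2 \<le> (D s)\<^sup>2 * exp (2 * c * (t - s))"
proof -
  define \<phi> where "\<phi> = (\<lambda>t. (D t)\<^sup>2 * exp (- (2 * c * t)))"
  have "\<phi> t \<le> \<phi> s"
  proof (rule DERIV_nonpos_imp_nonincreasing_within_ge0[OF _ _ st])
    fix t :: real assume t: "0 \<le> t"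
    show "(\<phi> has_real_derivative 2 * exp (- (2 * c * t)) * (D t * D' t - c * (D t)\<^sup>2))
            (at t within {0..})"
      unfolding \<phi>_def
      by (rule derivative_eq_intros deriv[OF t] refl | simp add: algebra_simps power2_eq_square)+
    show "2 * exp (- (2 * c * t)) * (D t * D' t - c * (D t)\<^sup>2) \<le> 0"
      using contraction[OF t] by (intro mult_nonneg_nonpos) auto
  qed
  then have "\<phi> t * exp (2 * c * t) \<le> \<phi> s * exp (2 * c * t)" by (intro mult_right_mono) auto
  then show ?thesis
    unfolding \<phi>_def by (simp add: mult.assoc exp_add[symmetric] algebra_simps)
qed

lemma nonneg_if_nonneg_at_0:
  assumes D0: "0 \<le> D 0" and t: "0 \<le> t"
  shows "0 \<le> D t"
proof (rule ccontr)
  assume "\<not> 0 \<le> D t"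
  then have neg: "D t < 0" by simp
  have "continuous_on {0..} D" by (rule DERIV_continuous_on) (use deriv in auto)
  then have "continuous_on {0..t} D" by (rule continuous_on_subset) auto
  then obtain s where s: "0 \<le> s" "s \<le> t" "D s = 0" using IVT2'[of D t 0 0] neg D0 t by auto
  from square_le_exp[OF s(1,2)] s(3) have "(D t)\<^sup>2 \<le> 0" by simp
  with neg show False by (metis not_le zero_less_power2 neq_iff)
qed

lemma tendsto_zero:
  assumes "c < 0"
  shows "(D \<longlongrightarrow> 0) at_top"
proof -
  have bound: "((\<lambda>t. (D 0)\<^sup>2 * exp (2 * c * (t - 0))) \<longlongrightarrow> 0) at_top"
    using assms by real_asymp
  have "((\<lambda>t. (D t)\<^sup>2) \<longlongrightarrow> 0) at_top"
  proof (rule tendsto_sandwich[OF _ _ tendsto_const bound])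
    show "\<forall>\<^sub>F t in at_top. (D t)\<^sup>2 \<le> (D 0)\<^sup>2 * exp (2 * c * (t - 0))"
      using eventually_ge_at_top[of 0] by eventually_elim (rule square_le_exp, auto)
  qed auto
  then have "((\<lambda>t. sqrt ((D t)\<^sup>2)) \<longlongrightarrow> sqrt 0) at_top" by (rule tendsto_real_sqrt)
  then show ?thesis by (simp add: tendsto_rabs_zero_iff)
qed

end

definition UN_map :: "(real \<Rightarrow> real \<Rightarrow> real) \<Rightarrow> (real \<Rightarrow> real \<Rightarrow> real) \<Rightarrow> real \<Rightarrow> real" where
  "UN_map f0 f1 = (\<lambda>\<pi>. \<pi> * f1 0 \<pi> + (1 - \<pi>) * f0 0 \<pi>)"

lemma field_UNpol: "field f0 f1 (UNpol p) p j = UN_map f0 f1 (p j) - p j"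
  by (simp add: field_def sel_def UNpol_def piv_def UN_map_def algebra_simps)

lemma field_AA1pol:
  assumes "p GA \<in> {0..1}" "p GB \<in> {0..1}"
  shows "field f0 f1 (AA1pol p) p j =
           p j * (f1 0 (min (p GA) (p GB)) - 1) + (1 - p j) * f0 0 (min (p GA) (p GB))"
proof -
  have "sel (AA1pol p) p True j = min (p GA) (p GB)"
    using assms by (cases j) (auto simp: sel_def AA1pol_def Let_def adv_def piv_def min_def)
  then show ?thesis by (simp add: field_def sel_def AA1pol_def)
qed

lemma field_AA2pol:
  assumes "p GA \<in> {0..1}" "p GB \<in> {0..1}"
  shows "field f0 f1 (AA2pol p) p j = p j * (f1 (max (p GA) (p GB) - p j) (p j) - 1)
           + (1 - p j) * f0 (max (p GA) (p GB) - p j) (p j)"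
proof -
  have "sel (AA2pol p) p False j = max (p GA) (p GB) - p j"
    using assms by (cases j) (auto simp: sel_def AA2pol_def Let_def adv_def piv_def max_def)
  then show ?thesis by (simp add: field_def sel_def AA2pol_def piv_def)
qed

lemma utility_UNpol: "utility u0 u1 gA (UNpol p) p = u1 * (gA * p GA + (1 - gA) * p GB)"
  by (simp add: utility_def UNpol_def gfrac_def piv_def algebra_simps)

lemma utility_AA1pol:
  assumes "p GA \<in> {0..1}" "p GB \<in> {0..1}" "p GB \<le> p GA"
  shows "utility u0 u1 gA (AA1pol p) p = u1 * p GB"
  using assms
  by (cases "p GA = 0")
    (simp_all add: utility_def AA1pol_def gfrac_def piv_def adv_def algebra_simps)

lemma utility_AA2pol:
  assumes "p GA \<in> {0..1}" "p GB \<in> {0..1}" "p GB \<le> p GA"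
  shows "utility u0 u1 gA (AA2pol p) p =
           u1 * (gA * p GA + (1 - gA) * p GB) + (1 - gA) * u0 * (p GA - p GB)"
proof -
  have rate: "(p GA - p GB) / (1 - p GB) * (1 - p GB) = p GA - p GB"
    using assms by (cases "p GB = 1") auto
  have "utility u0 u1 gA (AA2pol p) p = gA * (u1 * p GA)
          + (1 - gA) * (u1 * p GB + u0 * ((p GA - p GB) / (1 - p GB) * (1 - p GB)))"
    using assms by (simp add: utility_def AA2pol_def gfrac_def piv_def adv_def)
  then show ?thesis unfolding rate by (simp add: algebra_simps)
qed

lemma AA1pol_gap_contraction:
  assumes p: "p GA \<in> {0..1}" "p GB \<in> {0..1}"
    and K: "\<And>\<pi>. \<pi> \<in> {0..1} \<Longrightarrow> \<bar>f1 0 \<pi> - f0 0 \<pi>\<bar> \<le> K"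
  shows "(p GA - p GB) * (field f0 f1 (AA1pol p) p GA - field f0 f1 (AA1pol p) p GB)
           \<le> (K - 1) * (p GA - p GB)\<^sup>2"
proof -
  define m where "m = min (p GA) (p GB)"
  have "m \<in> {0..1}" using p by (auto simp: m_def min_def)
  have "field f0 f1 (AA1pol p) p GA - field f0 f1 (AA1pol p) p GB
          = (f1 0 m - f0 0 m - 1) * (p GA - p GB)"
    using p by (simp add: field_AA1pol m_def algebra_simps)
  then have "(p GA - p GB) * (field f0 f1 (AA1pol p) p GA - field f0 f1 (AA1pol p) p GB)
               = (f1 0 m - f0 0 m - 1) * (p GA - p GB)\<^sup>2"
    by (simp add: power2_eq_square)
  also have "\<dots> \<le> (K - 1) * (p GA - p GB)\<^sup>2"
    using K[OF \<open>m \<in> {0..1}\<close>] by (intro mult_right_mono) auto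
  finally show ?thesis .
qed

lemma lipschitz_gap_contraction:
  assumes ab: "a \<in> {0..1}" "b \<in> {0..1}" "b \<le> a"
    and l1: "l1_lipschitz f1 L1" and l0: "l1_lipschitz f0 L0"
    and K: "2 * (a * L1 + (1 - a) * L0) + \<bar>f1 (a - b) b - f0 (a - b) b\<bar> \<le> K"
  shows "(a - b) * ((a * (f1 0 a - 1) + (1 - a) * f0 0 a)
                    - (b * (f1 (a - b) b - 1) + (1 - b) * f0 (a - b) b))
         \<le> (K - 1) * (a - b)\<^sup>2"
proof -
  define d where "d = a - b"
  have d: "0 \<le> d" "d \<le> 1" using ab by (auto simp: d_def)
  have lip1: "f1 0 a - f1 d b \<le> 2 * L1 * d"
    using l1[unfolded l1_lipschitz_def, rule_format, of 0 a d b] ab d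
    by (simp add: abs_le_iff d_def algebra_simps)
  have lip0: "f0 0 a - f0 d b \<le> 2 * L0 * d"
    using l0[unfolded l1_lipschitz_def, rule_format, of 0 a d b] ab d
    by (simp add: abs_le_iff d_def algebra_simps)
  have "(a * (f1 0 a - 1) + (1 - a) * f0 0 a) - (b * (f1 d b - 1) + (1 - b) * f0 d b)
          = - d + a * (f1 0 a - f1 d b) + (1 - a) * (f0 0 a - f0 d b) + d * (f1 d b - f0 d b)"
    (is "?drift = _")
    by (simp add: d_def algebra_simps)
  also have "\<dots> \<le> - d + a * (2 * L1 * d) + (1 - a) * (2 * L0 * d) + d * \<bar>f1 d b - f0 d b\<bar>"
    using mult_left_mono[OF lip1, of a] mult_left_mono[OF lip0, of "1 - a"]
      mult_left_mono[OF abs_ge_self[of "f1 d b - f0 d b"] d(1)] ab by auto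
  also have "\<dots> = d * (2 * (a * L1 + (1 - a) * L0) + \<bar>f1 d b - f0 d b\<bar> - 1)"
    by (simp add: algebra_simps)
  also have "\<dots> \<le> d * (K - 1)" using K d by (intro mult_left_mono) (auto simp: d_def)
  finally have "?drift \<le> d * (K - 1)" .
  from mult_left_mono[OF this d(1)] show ?thesis
    by (simp add: d_def power2_eq_square algebra_simps)
qed

lemma AA2pol_gap_contraction:
  assumes p: "p GA \<in> {0..1}" "p GB \<in> {0..1}"
    and l1: "l1_lipschitz f1 L1" and l0: "l1_lipschitz f0 L0"
    and K: "\<And>d \<pi>. 0 \<le> d \<Longrightarrow> d \<le> \<pi> \<Longrightarrow> \<pi> \<le> 1 \<Longrightarrow>
              2 * (\<pi> * L1 + (1 - \<pi>) * L0) + \<bar>f1 d (\<pi> - d) - f0 d (\<pi> - d)\<bar> \<le> K"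
  shows "(p GA - p GB) * (field f0 f1 (AA2pol p) p GA - field f0 f1 (AA2pol p) p GB)
           \<le> (K - 1) * (p GA - p GB)\<^sup>2"
proof -
  have ordered: "(a - b) * ((a * (f1 0 a - 1) + (1 - a) * f0 0 a)
                    - (b * (f1 (a - b) b - 1) + (1 - b) * f0 (a - b) b)) \<le> (K - 1) * (a - b)\<^sup>2"
    if ab: "a \<in> {0..1}" "b \<in> {0..1}" "b \<le> a" for a b
    using lipschitz_gap_contraction[OF ab l1 l0] K[of "a - b" a] ab by simp
  show ?thesis
  proof (cases "p GB \<le> p GA")
    case True
    then show ?thesis
      using ordered[OF p True] p by (simp add: field_AA2pol max_def)
  next
    case False
    then show ?thesis
      using ordered[OF p(2,1)] p by (simp add: field_AA2pol max_def algebra_simps power2_commute)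
  qed
qed

lemma trajectory_gap_vanishes:
  assumes tr: "trajectory f0 f1 P x"
    and contraction: "\<And>p. p GA \<in> {0..1} \<Longrightarrow> p GB \<in> {0..1} \<Longrightarrow>
           (p GA - p GB) * (field f0 f1 (P p) p GA - field f0 f1 (P p) p GB)
             \<le> (K - 1) * (p GA - p GB)\<^sup>2"
    and K: "K < 1" and start: "x 0 GB \<le> x 0 GA"
  shows "\<forall>t\<ge>0. x t GB \<le> x t GA" and "((\<lambda>t. x t GA - x t GB) \<longlongrightarrow> 0) at_top"
proof -
  interpret square_contraction "\<lambda>t. x t GA - x t GB"
    "\<lambda>t. field f0 f1 (P (x t)) (x t) GA - field f0 f1 (P (x t)) (x t) GB" "K - 1"
    using tr unfolding trajectory_def by unfold_locales (auto intro: DERIV_diff contraction)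
  show "\<forall>t\<ge>0. x t GB \<le> x t GA" using nonneg_if_nonneg_at_0 start by auto
  show "((\<lambda>t. x t GA - x t GB) \<longlongrightarrow> 0) at_top" using tendsto_zero K by simp
qed

lemma trajectory_component_sol1:
  assumes tr: "trajectory f0 f1 P x"
    and unforced: "\<And>t. 0 \<le> t \<Longrightarrow> field f0 f1 (P (x t)) (x t) g = f (x t g) - x t g"
  shows "sol1 f (\<lambda>t. x t g)"
  using tr unfolding trajectory_def sol1_def by (metis unforced)

lemma k_equilibrium_tendsto:
  assumes "k_equilibrium f k e \<delta>" "l \<in> {1..k}" "sol1 f y" "y 0 \<in> basin k \<delta> l"
  shows "(y \<longlongrightarrow> e l) at_top"
  using assms unfolding k_equilibrium_def by blast

lemma k_equilibrium_mono:
  assumes keq: "k_equilibrium f k e \<delta>" and "1 \<le> a" "a \<le> b" "b \<le> k"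
  shows "e a \<le> e b"
  using \<open>a \<le> b\<close> \<open>b \<le> k\<close>
proof (induction b rule: dec_induct)
  case (step n)
  then have "e n \<le> e (Suc n)" using keq \<open>1 \<le> a\<close> unfolding k_equilibrium_def by auto
  with step show ?case by simp
qed simp

lemma k_equilibrium_basin_index_le:
  assumes keq: "k_equilibrium f k e \<delta>" and ij: "i \<in> {1..k}" "j \<in> {1..k}"
    and pb: "pb \<in> basin k \<delta> i" and pa: "pa \<in> basin k \<delta> j" and le: "pb \<le> pa"
  shows "i \<le> j"
proof (rule ccontr)
  assume "\<not> i \<le> j"
  then have ji: "j < i" and bounds: "k \<noteq> 1" "j < k" "2 \<le> i" using ij by auto
  have sep: "e l < \<delta> l \<and> \<delta> l < e (Suc l)" if "l \<in> {1..<k}" for l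
    using keq that unfolding k_equilibrium_def by auto
  have "\<delta> j \<le> \<delta> (i - 1)"
  proof (cases "j = i - 1")
    case False
    have "j \<in> {1..<k}" "i - 1 \<in> {1..<k}" using ji ij bounds by auto
    then have "\<delta> j < e (Suc j)" "e (i - 1) < \<delta> (i - 1)" using sep by blast+
    moreover have "e (Suc j) \<le> e (i - 1)"
      using k_equilibrium_mono[OF keq, of "Suc j" "i - 1"] False ji ij by auto
    ultimately show ?thesis by linarith
  qed simp
  moreover have "pa < \<delta> j" "\<delta> (i - 1) < pb"
    using pa pb bounds ij unfolding basin_def by (auto split: if_splits)
  ultimately show False using le by simp
qed

lemma le_L_AA1:
  fixes f0 f1 :: "real \<Rightarrow> real \<Rightarrow> real"
  assumes f0_range: "\<forall>x\<in>{0..1}. \<forall>y\<in>{0..1}. f0 x y \<in> {0..1}"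
    and f1_range: "\<forall>x\<in>{0..1}. \<forall>y\<in>{0..1}. f1 x y \<in> {0..1}"
    and \<pi>: "\<pi> \<in> {0..1}"
  shows "\<bar>f1 0 \<pi> - f0 0 \<pi>\<bar> \<le> (SUP \<pi>\<in>{0..1}. \<bar>f1 0 \<pi> - f0 0 \<pi>\<bar>)"
proof (rule cSUP_upper[OF \<pi>], rule bdd_aboveI2)
  fix \<pi>' :: real assume "\<pi>' \<in> {0..1}"
  then have "f0 0 \<pi>' \<in> {0..1}" "f1 0 \<pi>' \<in> {0..1}" using f0_range f1_range by auto
  then show "\<bar>f1 0 \<pi>' - f0 0 \<pi>'\<bar> \<le> 1" by auto
qed

lemma le_L_AA2:
  fixes f0 f1 :: "real \<Rightarrow> real \<Rightarrow> real" and L0 L1 :: real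
  assumes f0_range: "\<forall>x\<in>{0..1}. \<forall>y\<in>{0..1}. f0 x y \<in> {0..1}"
    and f1_range: "\<forall>x\<in>{0..1}. \<forall>y\<in>{0..1}. f1 x y \<in> {0..1}"
    and d\<pi>: "0 \<le> d" "d \<le> \<pi>" "\<pi> \<le> 1"
  shows "2 * (\<pi> * L1 + (1 - \<pi>) * L0) + \<bar>f1 d (\<pi> - d) - f0 d (\<pi> - d)\<bar>
           \<le> (SUP (d, \<pi>)\<in>{(d, \<pi>). 0 \<le> d \<and> d \<le> \<pi> \<and> \<pi> \<le> 1}.
                2 * (\<pi> * L1 + (1 - \<pi>) * L0) + \<bar>f1 d (\<pi> - d) - f0 d (\<pi> - d)\<bar>)"
    (is "_ \<le> Sup (?h ` ?S)")
proof -
  have "bdd_above (?h ` ?S)"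
  proof (rule bdd_aboveI2)
    fix z assume "z \<in> ?S"
    then obtain d' \<pi>' where z: "z = (d', \<pi>')" "0 \<le> d'" "d' \<le> \<pi>'" "\<pi>' \<le> 1" by auto
    then have "f0 d' (\<pi>' - d') \<in> {0..1}" "f1 d' (\<pi>' - d') \<in> {0..1}"
      using f0_range f1_range by auto
    moreover have "\<pi>' * L1 + (1 - \<pi>') * L0 \<le> max L1 L0" using z by (intro convex_bound_le) auto
    ultimately show "?h z \<le> 2 * max L1 L0 + 1" by (auto simp: z(1))
  qed
  moreover have "(d, \<pi>) \<in> ?S" using d\<pi> by simp
  ultimately have "?h (d, \<pi>) \<le> Sup (?h ` ?S)" by (rule cSUP_upper[rotated])
  then show ?thesis by simp
qed

lemma UNpol_tendsto:
  assumes keq: "k_equilibrium (UN_map f0 f1) k e \<delta>" and ij: "i \<in> {1..k}" "j \<in> {1..k}"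
    and tr: "trajectory f0 f1 UNpol x"
    and x0: "x 0 GB \<in> basin k \<delta> i" "x 0 GA \<in> basin k \<delta> j"
  shows "((\<lambda>t. x t GA) \<longlongrightarrow> e j) at_top" and "((\<lambda>t. x t GB) \<longlongrightarrow> e i) at_top"
    and "((\<lambda>t. utility u0 u1 gA (UNpol (x t)) (x t))
            \<longlongrightarrow> u1 * (gA * e j + (1 - gA) * e i)) at_top"
proof -
  have sol: "sol1 (UN_map f0 f1) (\<lambda>t. x t g)" for g
    by (rule trajectory_component_sol1[OF tr]) (simp add: field_UNpol)
  show A: "((\<lambda>t. x t GA) \<longlongrightarrow> e j) at_top"
    by (rule k_equilibrium_tendsto[OF keq ij(2) sol x0(2)])
  show B: "((\<lambda>t. x t GB) \<longlongrightarrow> e i) at_top"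
    by (rule k_equilibrium_tendsto[OF keq ij(1) sol x0(1)])
  show "((\<lambda>t. utility u0 u1 gA (UNpol (x t)) (x t))
          \<longlongrightarrow> u1 * (gA * e j + (1 - gA) * e i)) at_top"
    unfolding utility_UNpol by (intro tendsto_intros A B)
qed

lemma AA1pol_tendsto:
  assumes f0_range: "\<forall>x\<in>{0..1}. \<forall>y\<in>{0..1}. f0 x y \<in> {0..1}"
    and f1_range: "\<forall>x\<in>{0..1}. \<forall>y\<in>{0..1}. f1 x y \<in> {0..1}"
    and L: "(SUP \<pi>\<in>{0..1}. \<bar>f1 0 \<pi> - f0 0 \<pi>\<bar>) < 1"
    and keq: "k_equilibrium (UN_map f0 f1) k e \<delta>" and i: "i \<in> {1..k}"
    and tr: "trajectory f0 f1 AA1pol x"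
    and x0: "x 0 GB \<in> basin k \<delta> i" "x 0 GB \<le> x 0 GA"
  shows "((\<lambda>t. x t GA) \<longlongrightarrow> e i) at_top" and "((\<lambda>t. x t GB) \<longlongrightarrow> e i) at_top"
    and "((\<lambda>t. utility u0 u1 gA (AA1pol (x t)) (x t)) \<longlongrightarrow> u1 * e i) at_top"
proof -
  have range: "\<forall>t\<ge>0. x t GA \<in> {0..1} \<and> x t GB \<in> {0..1}"
    using tr unfolding trajectory_def by auto
  have "(p GA - p GB) * (field f0 f1 (AA1pol p) p GA - field f0 f1 (AA1pol p) p GB)
          \<le> ((SUP \<pi>\<in>{0..1}. \<bar>f1 0 \<pi> - f0 0 \<pi>\<bar>) - 1) * (p GA - p GB)\<^sup>2"
    if "p GA \<in> {0..1}" "p GB \<in> {0..1}" for p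
    by (rule AA1pol_gap_contraction[OF that]) (rule le_L_AA1[OF f0_range f1_range])
  note gap = trajectory_gap_vanishes[OF tr this L x0(2)]
  have "sol1 (UN_map f0 f1) (\<lambda>t. x t GB)"
    by (rule trajectory_component_sol1[OF tr])
      (use range gap(1) in \<open>simp add: field_AA1pol UN_map_def min_absorb2 algebra_simps\<close>)
  then show B: "((\<lambda>t. x t GB) \<longlongrightarrow> e i) at_top"
    by (rule k_equilibrium_tendsto[OF keq i]) (use x0(1) in simp)
  have "((\<lambda>t. x t GB + (x t GA - x t GB)) \<longlongrightarrow> e i + 0) at_top"
    by (intro tendsto_intros B gap(2))
  then show "((\<lambda>t. x t GA) \<longlongrightarrow> e i) at_top" by simp
  have "\<forall>\<^sub>F t in at_top. u1 * x t GB = utility u0 u1 gA (AA1pol (x t)) (x t)"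
    using eventually_ge_at_top[of 0]
    by eventually_elim (use range gap(1) in \<open>simp add: utility_AA1pol\<close>)
  with tendsto_mult_left[OF B]
  show "((\<lambda>t. utility u0 u1 gA (AA1pol (x t)) (x t)) \<longlongrightarrow> u1 * e i) at_top"
    by (rule tendsto_cong[THEN iffD1, rotated])
qed

lemma AA2pol_tendsto:
  assumes f0_range: "\<forall>x\<in>{0..1}. \<forall>y\<in>{0..1}. f0 x y \<in> {0..1}"
    and f1_range: "\<forall>x\<in>{0..1}. \<forall>y\<in>{0..1}. f1 x y \<in> {0..1}"
    and l1: "l1_lipschitz f1 L1" and l0: "l1_lipschitz f0 L0"
    and L: "(SUP (d, \<pi>)\<in>{(d, \<pi>). 0 \<le> d \<and> d \<le> \<pi> \<and> \<pi> \<le> 1}.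
              2 * (\<pi> * L1 + (1 - \<pi>) * L0) + \<bar>f1 d (\<pi> - d) - f0 d (\<pi> - d)\<bar>) < 1"
    and keq: "k_equilibrium (UN_map f0 f1) k e \<delta>" and j: "j \<in> {1..k}"
    and tr: "trajectory f0 f1 AA2pol x"
    and x0: "x 0 GA \<in> basin k \<delta> j" "x 0 GB \<le> x 0 GA"
  shows "((\<lambda>t. x t GA) \<longlongrightarrow> e j) at_top" and "((\<lambda>t. x t GB) \<longlongrightarrow> e j) at_top"
    and "((\<lambda>t. utility u0 u1 gA (AA2pol (x t)) (x t)) \<longlongrightarrow> u1 * e j) at_top"
proof -
  have "(p GA - p GB) * (field f0 f1 (AA2pol p) p GA - field f0 f1 (AA2pol p) p GB)
          \<le> ((SUP (d, \<pi>)\<in>{(d, \<pi>). 0 \<le> d \<and> d \<le> \<pi> \<and> \<pi> \<le> 1}.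
                2 * (\<pi> * L1 + (1 - \<pi>) * L0) + \<bar>f1 d (\<pi> - d) - f0 d (\<pi> - d)\<bar>) - 1)
             * (p GA - p GB)\<^sup>2"
    if "p GA \<in> {0..1}" "p GB \<in> {0..1}" for p
    by (rule AA2pol_gap_contraction[OF that l1 l0]) (rule le_L_AA2[OF f0_range f1_range])
  note gap = trajectory_gap_vanishes[OF tr this L x0(2)]
  have range: "\<forall>t\<ge>0. x t GA \<in> {0..1} \<and> x t GB \<in> {0..1}"
    using tr unfolding trajectory_def by auto
  have "sol1 (UN_map f0 f1) (\<lambda>t. x t GA)"
    by (rule trajectory_component_sol1[OF tr])
      (use range gap(1) in \<open>simp add: field_AA2pol UN_map_def max_absorb1 algebra_simps\<close>)
  then show A: "((\<lambda>t. x t GA) \<longlongrightarrow> e j) at_top"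
    by (rule k_equilibrium_tendsto[OF keq j]) (use x0(1) in simp)
  have "((\<lambda>t. x t GA - (x t GA - x t GB)) \<longlongrightarrow> e j - 0) at_top"
    by (intro tendsto_intros A gap(2))
  then show B: "((\<lambda>t. x t GB) \<longlongrightarrow> e j) at_top" by simp
  have "((\<lambda>t. u1 * (gA * x t GA + (1 - gA) * x t GB) + (1 - gA) * u0 * (x t GA - x t GB))
          \<longlongrightarrow> u1 * (gA * e j + (1 - gA) * e j) + (1 - gA) * u0 * 0) at_top"
    by (intro tendsto_intros A B gap(2))
  also have "u1 * (gA * e j + (1 - gA) * e j) + (1 - gA) * u0 * 0 = u1 * e j"
    by (simp add: algebra_simps)
  finally have lim:
    "((\<lambda>t. u1 * (gA * x t GA + (1 - gA) * x t GB) + (1 - gA) * u0 * (x t GA - x t GB))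
       \<longlongrightarrow> u1 * e j) at_top" .
  have "\<forall>\<^sub>F t in at_top.
          u1 * (gA * x t GA + (1 - gA) * x t GB) + (1 - gA) * u0 * (x t GA - x t GB)
            = utility u0 u1 gA (AA2pol (x t)) (x t)"
    using eventually_ge_at_top[of 0]
    by eventually_elim (use range gap(1) in \<open>simp add: utility_AA2pol\<close>)
  with lim show "((\<lambda>t. utility u0 u1 gA (AA2pol (x t)) (x t)) \<longlongrightarrow> u1 * e j) at_top"
    by (rule tendsto_cong[THEN iffD1, rotated])
qed

theorem mainTheorem12:
  fixes f0 f1 :: "real \<Rightarrow> real \<Rightarrow> real"
    and u0 u1 gA :: real
    and k i j :: nat
    and e \<delta> :: "nat \<Rightarrow> real"
    and p0 :: "grp \<Rightarrow> real"
  assumes f0_C1: "C1_on2 f0 ({0..1} \<times> {0..1})"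
    and f1_C1: "C1_on2 f1 ({0..1} \<times> {0..1})"
    and f0_range: "\<forall>x\<in>{0..1}. \<forall>y\<in>{0..1}. f0 x y \<in> {0..1}"
    and f1_range: "\<forall>x\<in>{0..1}. \<forall>y\<in>{0..1}. f1 x y \<in> {0..1}"
    and u: "u0 \<le> 0" "0 \<le> u1"
    and gA: "gA \<in> {0..1}"
    and keq: "k_equilibrium (\<lambda>\<pi>. \<pi> * f1 0 \<pi> + (1 - \<pi>) * f0 0 \<pi>) k e \<delta>"
    and ij: "i \<in> {1..k}" "j \<in> {1..k}"
    and p0B: "p0 GB \<in> basin k \<delta> i"
    and p0A: "p0 GA \<in> basin k \<delta> j"
    and Aadv: "p0 GB \<le> p0 GA"
  shows
    "(\<forall>x. trajectory f0 f1 UNpol x \<and> x 0 = p0 \<longrightarrow>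
         ((\<lambda>t. x t GA) \<longlongrightarrow> e j) at_top \<and>
         ((\<lambda>t. x t GB) \<longlongrightarrow> e i) at_top \<and>
         ((\<lambda>t. utility u0 u1 gA (UNpol (x t)) (x t))
            \<longlongrightarrow> u1 * (gA * e j + (1 - gA) * e i)) at_top)
     \<and>
     ((SUP \<pi>\<in>{0..1}. \<bar>f1 0 \<pi> - f0 0 \<pi>\<bar>) < 1 \<longrightarrow>
       (\<forall>x. trajectory f0 f1 AA1pol x \<and> x 0 = p0 \<longrightarrow>
         ((\<lambda>t. x t GA) \<longlongrightarrow> e i) at_top \<and>
         ((\<lambda>t. x t GB) \<longlongrightarrow> e i) at_top \<and>
         ((\<lambda>t. utility u0 u1 gA (AA1pol (x t)) (x t)) \<longlongrightarrow> u1 * e i) at_top) \<and>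
       u1 * e i \<le> u1 * (gA * e j + (1 - gA) * e i))
     \<and>
     (\<forall>L1 L0. l1_lipschitz f1 L1 \<and> l1_lipschitz f0 L0 \<and>
        (SUP (d, \<pi>)\<in>{(d, \<pi>). 0 \<le> d \<and> d \<le> \<pi> \<and> \<pi> \<le> 1}.
            2 * (\<pi> * L1 + (1 - \<pi>) * L0) + \<bar>f1 d (\<pi> - d) - f0 d (\<pi> - d)\<bar>) < 1 \<longrightarrow>
       (\<forall>x. trajectory f0 f1 AA2pol x \<and> x 0 = p0 \<longrightarrow>
         ((\<lambda>t. x t GA) \<longlongrightarrow> e j) at_top \<and>
         ((\<lambda>t. x t GB) \<longlongrightarrow> e j) at_top \<and>
         ((\<lambda>t. utility u0 u1 gA (AA2pol (x t)) (x t)) \<longlongrightarrow> u1 * e j) at_top) \<and>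
       u1 * (gA * e j + (1 - gA) * e i) \<le> u1 * e j)"
proof -
  note keq' = keq[folded UN_map_def]
  have "e i \<le> e j"
    using k_equilibrium_basin_index_le[OF keq' ij p0B p0A Aadv] ij
    by (intro k_equilibrium_mono[OF keq']) auto
  then have "e i \<le> gA * e j + (1 - gA) * e i" "gA * e j + (1 - gA) * e i \<le> e j"
    using mult_left_mono[of "e i" "e j" gA] mult_left_mono[of "e i" "e j" "1 - gA"] gA
    by (auto simp: algebra_simps)
  then have utility_order: "u1 * e i \<le> u1 * (gA * e j + (1 - gA) * e i)"
      "u1 * (gA * e j + (1 - gA) * e i) \<le> u1 * e j"
    using u by (auto intro: mult_left_mono)
  have start: "x 0 GA \<in> basin k \<delta> j" "x 0 GB \<in> basin k \<delta> i" "x 0 GB \<le> x 0 GA"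
    if "x 0 = p0" for x :: "real \<Rightarrow> grp \<Rightarrow> real"
    using that p0A p0B Aadv by auto
  show ?thesis
    by (intro conjI)
      (use UNpol_tendsto[OF keq' ij] start in blast,
        use AA1pol_tendsto[OF f0_range f1_range _ keq' ij(1)] start utility_order in blast,
        use AA2pol_tendsto[OF f0_range f1_range _ _ _ keq' ij(2)] start utility_order in blast)
qed

end
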